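(* Let $n\ge3$. For every $\varepsilon>0$ there exists a lens $L=B(a,1)\cap B(b,1)\subseteq\mathbb R^n$ (with nonempty interior) such that the Steiner symmetral $S_{e_n}(L)$ has a smooth boundary point at which the sectional curvature in some direction is smaller than $\varepsilon$. Consequently, by scaling, for every $\kappa>0$ there is an intersection of two Euclidean balls of radius $1/\kappa$ (so all its sectional curvatures are at least $\kappa$) whose Steiner symmetral in direction $e_n$ is not in $\mathcal S_n$.
   Context: For $a\in\mathbb R^n$, $B(a,1)$ is the closed Euclidean unit ball centered at $a$; a lens is an intersection of two such balls. $\mathcal S_n$ is the class of all intersections of families of closed Euclidean unit balls in $\mathbb R^n$. For a boundary point locally given as the graph of a $C^2$ function $H$ over $e_n^\perp\cong\mathbb R^{n-1}$ at $x$, the sectional curvature in direction $e_1$ is $\frac{|(\nabla^2H(x))_{1,1}|}{\sqrt{1+\|\nabla H(x)\|^2}\,(1+\langle e_1,\nabla H(x)\rangle^2)}$. For a compact convex set $K$ and $u\in S^{n-1}$, for each $x$ in the projection $P_{u^\perp}(K)$ write $K\cap(x+\mathbb Ru)=[x+a(x)u,x+b(x)u]$; the Steiner symmetral is $S_u(K)=\{x+yu: x\in P_{u^\perp}(K),\ |y|\le |b(x)-a(x)|/2\}$. *)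

theory Defs
  imports "HOL-Analysis.Analysis"
begin

text \<open>Ambient space R^n is modelled as (real^'m) \<times> real with n = CARD('m) + 1;
  the last factor is the e_n direction and real^'m is e_n^\<bottom>.  The product
  norm is the Euclidean norm, so cball is the Euclidean ball.\<close>

definition class_S :: "((real^'m) \<times> real) set set" where
  "class_S = {K. \<exists>F. K = \<Inter> ((\<lambda>a. cball a 1) ` F)}"

definition steiner_en :: "((real^'m) \<times> real) set \<Rightarrow> ((real^'m) \<times> real) set" where
  "steiner_en K = {(x, y). x \<in> fst ` K \<and>
      \<bar>y\<bar> \<le> \<bar>Sup {t. (x, t) \<in> K} - Inf {t. (x, t) \<in> K}\<bar> / 2}"

definition C2_on_with ::
  "(real^'m \<Rightarrow> real) \<Rightarrow> (real^'m) set \<Rightarrow> (real^'m \<Rightarrow> real^'m) \<Rightarrow> (real^'m \<Rightarrow> real^'m^'m) \<Rightarrow> bool" where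
  "C2_on_with H U G D \<longleftrightarrow> open U \<and>
     (\<forall>y\<in>U. (H has_derivative (\<lambda>h. G y \<bullet> h)) (at y)) \<and>
     (\<forall>y\<in>U. (G has_derivative (\<lambda>h. D y *v h)) (at y)) \<and>
     continuous_on U D"

text \<open>p is a smooth boundary point of K at which the sectional curvature in the
  coordinate direction i of e_n^\<bottom> is smaller than \<epsilon>: near p the boundary of K is
  the graph of a C^2 function H over e_n^\<bottom>, p = (x, H x).\<close>
definition smooth_bdry_small_curv ::
  "((real^'m) \<times> real) set \<Rightarrow> ((real^'m) \<times> real) \<Rightarrow> real \<Rightarrow> bool" where
  "smooth_bdry_small_curv K p \<epsilon> \<longleftrightarrow> p \<in> frontier K \<and>
     (\<exists>H U G D W i. C2_on_with H U G D \<and> fst p \<in> U \<and> snd p = H (fst p) \<and>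
        open W \<and> p \<in> W \<and> frontier K \<inter> W = (\<lambda>y. (y, H y)) ` U \<inter> W \<and>
        \<bar>D (fst p) $ i $ i\<bar> /
          (sqrt (1 + (norm (G (fst p)))\<^sup>2) * (1 + (axis i 1 \<bullet> G (fst p))\<^sup>2)) < \<epsilon>)"

end

theory Submission
  imports Defs
begin

text \<open>
  Take the lens cut out of the balls of radius \<open>R\<close> about \<open>(c1, t)\<close> and \<open>(c2, 0)\<close>, where the
  centres are displaced along two orthogonal directions \<open>e\<^sub>i\<close>, \<open>e\<^sub>j\<close> of \<open>e\<^sub>n\<^sup>\<bottom>\<close>.  Over
  \<open>x\<close> near \<open>0\<close> its vertical chord is \<open>[t - \<rho>\<^sub>1 x, \<rho>\<^sub>2 x]\<close> with \<open>\<rho>\<^sub>k\<close> the hemisphere heights,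
  so the boundary of the Steiner symmetral is the graph of \<open>g = (\<rho>\<^sub>1 + \<rho>\<^sub>2 - t) / 2\<close>.  At
  \<open>0\<close> the second ball is cut at the small height \<open>r = t\<^sup>3 / R\<^sup>2\<close>, close to its equator, so
  \<open>|\<nabla>g|\<close> is of order \<open>R / r\<close>, while \<open>\<partial>\<^sub>i\<^sub>ig(0) = - R\<^sup>2 / t\<^sup>3\<close>; the sectional curvature in
  direction \<open>e\<^sub>i\<close> is therefore \<open>O(t\<^sup>2 / R\<^sup>3)\<close>.

  Conversely, every frontier point of an intersection of unit balls lies on a unit sphere
  enclosing the set, and a \<open>C\<^sup>2\<close> graph touching a unit sphere from inside has all sectional
  curvatures at least \<open>1\<close>: this follows from the first- and second-order conditions for the
  squared distance to the centre, which is maximal at the touching point.  Radius \<open>1/\<kappa>\<close> and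
  \<open>\<epsilon> = 1\<close> give the second claim.
\<close>

section \<open>Sets in the class S have curvature at least one\<close>

lemma Inter_cballs_frontier_supporting_ball:
  fixes F :: "'a::heine_borel set"
  assumes p: "p \<in> frontier (\<Inter>a\<in>F. cball a r)"
  shows "\<exists>l. (\<Inter>a\<in>F. cball a r) \<subseteq> cball l r \<and> dist l p = r"
proof -
  define K where "K = (\<Inter>a\<in>F. cball a r)"
  have "closed K" unfolding K_def by (auto intro!: closed_Inter)
  hence pK: "p \<in> K" using p frontier_subset_closed unfolding K_def by blast
  have "F \<noteq> {}" using p by auto
  have "F \<subseteq> cball p r" using pK by (auto simp: K_def dist_commute)
  hence "compact (closure F)" by (meson bounded_cball bounded_subset compact_closure)
  hence "\<exists>l\<in>closure F. \<forall>a\<in>closure F. dist a p \<le> dist l p"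
    using \<open>F \<noteq> {}\<close> by (intro continuous_attains_sup) (auto intro!: continuous_intros)
  then obtain l where l: "l \<in> closure F" and l_max: "\<And>a. a \<in> closure F \<Longrightarrow> dist a p \<le> dist l p"
    by blast
  txt \<open>A centre in \<open>closure F\<close> farthest from \<open>p\<close> gives the supporting ball.\<close>
  have "closure F \<subseteq> (\<Inter>k\<in>K. cball k r)"
    by (intro closure_minimal) (auto simp: K_def dist_commute)
  hence K_sub: "K \<subseteq> cball l r" using l by (auto simp: dist_commute)
  have "r \<le> dist l p + \<delta>" if "\<delta> > 0" for \<delta>
  proof -
    obtain z where "z \<notin> K" "dist p z < \<delta>"
      using p \<open>\<delta> > 0\<close> unfolding frontier_straddle K_def by blast
    then obtain a where "a \<in> F" "r < dist a z" unfolding K_def by (auto simp: not_le)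
    moreover have "dist a z \<le> dist a p + dist p z" by (rule dist_triangle)
    moreover have "dist a p \<le> dist l p" using \<open>a \<in> F\<close> l_max closure_subset by blast
    ultimately show ?thesis using \<open>dist p z < \<delta>\<close> by linarith
  qed
  hence "r \<le> dist l p" by (rule field_le_epsilon)
  moreover have "dist l p \<le> r" using K_sub pK by auto
  ultimately show ?thesis using K_sub unfolding K_def by (intro exI[of _ l]) auto
qed

lemma DERIV_local_max_second_deriv_nonpos:
  fixes f f' :: "real \<Rightarrow> real"
  assumes d: "d > 0"
    and f': "\<And>s. \<bar>s - x\<bar> < d \<Longrightarrow> (f has_real_derivative f' s) (at s)"
    and f'': "(f' has_real_derivative c) (at x)"
    and max: "\<And>s. \<bar>s - x\<bar> < d \<Longrightarrow> f s \<le> f x"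
  shows "c \<le> 0"
proof (rule ccontr)
  assume "\<not> c \<le> 0"
  have "f' x = 0"
    using DERIV_local_max[OF f'[of x] d] max d by (auto simp: abs_minus_commute)
  obtain e where e: "e > 0" "\<And>h. 0 < h \<Longrightarrow> h < e \<Longrightarrow> f' x < f' (x + h)"
    using DERIV_pos_inc_right[OF f''] \<open>\<not> c \<le> 0\<close> by auto
  define b where "b = min d e / 2"
  have b: "0 < b" "b < d" "b < e" using d e(1) by (auto simp: b_def)
  obtain z where z: "x < z" "z < x + b" "f (x + b) - f x = b * f' z"
    using MVT2[of x "x + b" f f'] b f' by force
  have "0 < f' z" using e(2)[of "z - x"] z b \<open>f' x = 0\<close> by simp
  hence "f x < f (x + b)" using z(3) mult_pos_pos[OF b(1)] by fastforce
  thus False using max[of "x + b"] b by simp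
qed

definition sectional_curvature :: "real^'m \<Rightarrow> real^'m^'m \<Rightarrow> real^'m \<Rightarrow> real" where
  "sectional_curvature g D v = \<bar>(D *v v) \<bullet> v\<bar> / (sqrt (1 + (norm g)\<^sup>2) * (1 + (v \<bullet> g)\<^sup>2))"

lemma smooth_bdry_small_curv_iff:
  "smooth_bdry_small_curv K p \<epsilon> \<longleftrightarrow> p \<in> frontier K \<and>
     (\<exists>H U G D W i. C2_on_with H U G D \<and> fst p \<in> U \<and> snd p = H (fst p) \<and>
        open W \<and> p \<in> W \<and> frontier K \<inter> W = (\<lambda>y. (y, H y)) ` U \<inter> W \<and>
        sectional_curvature (G (fst p)) (D (fst p)) (axis i 1) < \<epsilon>)"
  by (simp add: smooth_bdry_small_curv_def sectional_curvature_def inner_axis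
      matrix_vector_mult_basis column_def)

lemma sqdist_graph_along_line_has_derivative:
  fixes H :: "'a::real_inner \<Rightarrow> real"
  assumes H: "(H has_derivative (\<lambda>h. G (x0 + s *\<^sub>R v) \<bullet> h)) (at (x0 + s *\<^sub>R v))"
  shows "((\<lambda>s. (norm (x0 + s *\<^sub>R v - c))\<^sup>2 + (H (x0 + s *\<^sub>R v) - z)\<^sup>2) has_real_derivative
      2 * ((x0 + s *\<^sub>R v - c) \<bullet> v) + 2 * (H (x0 + s *\<^sub>R v) - z) * (G (x0 + s *\<^sub>R v) \<bullet> v)) (at s)"
proof -
  have line: "((\<lambda>s. x0 + s *\<^sub>R v) has_derivative (\<lambda>h. h *\<^sub>R v)) (at s)"
    by (auto intro!: derivative_eq_intros)
  have "((\<lambda>s. H (x0 + s *\<^sub>R v)) has_derivative (\<lambda>h. G (x0 + s *\<^sub>R v) \<bullet> (h *\<^sub>R v))) (at s)"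
    using has_derivative_compose[OF line H] by simp
  then show ?thesis
    unfolding power2_norm_eq_inner has_field_derivative_def
    by (auto intro!: derivative_eq_intros line simp: inner_commute algebra_simps)
qed

lemma sqdist_graph_along_line_has_second_derivative:
  fixes H :: "real^'m \<Rightarrow> real"
  assumes H: "(H has_derivative (\<lambda>h. G (x0 + s *\<^sub>R v) \<bullet> h)) (at (x0 + s *\<^sub>R v))"
    and G: "(G has_derivative (\<lambda>h. D (x0 + s *\<^sub>R v) *v h)) (at (x0 + s *\<^sub>R v))"
  shows "((\<lambda>s. 2 * ((x0 + s *\<^sub>R v - c) \<bullet> v) + 2 * (H (x0 + s *\<^sub>R v) - z) * (G (x0 + s *\<^sub>R v) \<bullet> v))
      has_real_derivative 2 * (v \<bullet> v) + 2 * (G (x0 + s *\<^sub>R v) \<bullet> v)\<^sup>2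
        + 2 * (H (x0 + s *\<^sub>R v) - z) * ((D (x0 + s *\<^sub>R v) *v v) \<bullet> v)) (at s)"
proof -
  have line: "((\<lambda>s. x0 + s *\<^sub>R v) has_derivative (\<lambda>h. h *\<^sub>R v)) (at s)"
    by (auto intro!: derivative_eq_intros)
  have "((\<lambda>s. H (x0 + s *\<^sub>R v)) has_derivative (\<lambda>h. G (x0 + s *\<^sub>R v) \<bullet> (h *\<^sub>R v))) (at s)"
    using has_derivative_compose[OF line H] by simp
  moreover have "((\<lambda>s. G (x0 + s *\<^sub>R v)) has_derivative (\<lambda>h. D (x0 + s *\<^sub>R v) *v (h *\<^sub>R v))) (at s)"
    using has_derivative_compose[OF line G] by simp
  ultimately show ?thesis
    unfolding has_field_derivative_def
    by (auto intro!: derivative_eq_intros line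
        simp: inner_commute algebra_simps power2_eq_square)
qed

lemma dist_Pair_power2:
  fixes c y :: "'a::real_normed_vector"
  shows "(dist (c, z) (y, w))\<^sup>2 = (norm (y - c))\<^sup>2 + (w - z)\<^sup>2"
  unfolding dist_Pair_Pair by (simp add: dist_norm norm_minus_commute[of c y] power2_commute[of z w])

lemma graph_in_cball_along_line:
  fixes H :: "'a::real_normed_vector \<Rightarrow> real"
  assumes "open U" and "x0 \<in> U" and inside: "\<forall>\<^sub>F x in nhds x0. (x, H x) \<in> cball a r"
  obtains d where "d > 0"
    and "\<And>s. \<bar>s\<bar> < d \<Longrightarrow> x0 + s *\<^sub>R v \<in> U \<and> dist a (x0 + s *\<^sub>R v, H (x0 + s *\<^sub>R v)) \<le> r"
proof -
  have "\<forall>\<^sub>F x in nhds x0. x \<in> U \<and> (x, H x) \<in> cball a r"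
    using eventually_nhds_in_open[OF assms(1,2)] inside by (rule eventually_conj)
  moreover have "((\<lambda>s. x0 + s *\<^sub>R v) \<longlongrightarrow> x0) (nhds 0)"
    using tendsto_add[OF tendsto_const tendsto_scaleR[OF filterlim_ident[of "nhds (0::real)"] tendsto_const], of x0 v]
    by simp
  ultimately have "\<forall>\<^sub>F s in nhds 0. x0 + s *\<^sub>R v \<in> U \<and> (x0 + s *\<^sub>R v, H (x0 + s *\<^sub>R v)) \<in> cball a r"
    by (rule eventually_compose_filterlim)
  then show ?thesis
    using that unfolding eventually_nhds_metric by (auto simp: dist_commute)
qed

lemma graph_inside_sphere_normal:
  fixes H :: "real^'m \<Rightarrow> real"
  assumes C2: "C2_on_with H U G D" and x0: "x0 \<in> U"
    and inside: "\<forall>\<^sub>F x in nhds x0. (x, H x) \<in> cball (c, z) r"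
    and touch: "dist (c, z) (x0, H x0) = r"
  shows "c = x0 + (H x0 - z) *\<^sub>R G x0"
proof -
  txt \<open>Along every line through \<open>x0\<close> the squared distance to the centre is maximal at \<open>x0\<close>.\<close>
  have "(x0 - c) \<bullet> w + (H x0 - z) * (G x0 \<bullet> w) = 0" for w
  proof -
    obtain d where "d > 0"
      and d: "\<And>s. \<bar>s\<bar> < d \<Longrightarrow> x0 + s *\<^sub>R w \<in> U \<and> dist (c, z) (x0 + s *\<^sub>R w, H (x0 + s *\<^sub>R w)) \<le> r"
      using graph_in_cball_along_line[OF _ x0 inside] C2 unfolding C2_on_with_def by blast
    have "((\<lambda>s. (norm (x0 + s *\<^sub>R w - c))\<^sup>2 + (H (x0 + s *\<^sub>R w) - z)\<^sup>2) has_real_derivative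
        2 * ((x0 - c) \<bullet> w) + 2 * (H x0 - z) * (G x0 \<bullet> w)) (at 0)"
      using sqdist_graph_along_line_has_derivative[of H G x0 0 w c z] C2 x0
      by (simp add: C2_on_with_def)
    then have "2 * ((x0 - c) \<bullet> w) + 2 * (H x0 - z) * (G x0 \<bullet> w) = 0"
      by (rule DERIV_local_max[OF _ \<open>d > 0\<close>])
        (use d touch in \<open>auto simp flip: dist_Pair_power2 intro!: power_mono\<close>)
    then show ?thesis by (auto simp: algebra_simps)
  qed
  from this[of "x0 - c + (H x0 - z) *\<^sub>R G x0"]
  have "(x0 - c + (H x0 - z) *\<^sub>R G x0) \<bullet> (x0 - c + (H x0 - z) *\<^sub>R G x0) = 0"
    by (simp add: inner_add_right inner_commute algebra_simps)
  then have "x0 - c + (H x0 - z) *\<^sub>R G x0 = 0" by simp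
  then show ?thesis by (simp add: algebra_simps)
qed

lemma graph_inside_sphere_second_order:
  fixes H :: "real^'m \<Rightarrow> real"
  assumes C2: "C2_on_with H U G D" and x0: "x0 \<in> U"
    and inside: "\<forall>\<^sub>F x in nhds x0. (x, H x) \<in> cball (c, z) r"
    and touch: "dist (c, z) (x0, H x0) = r"
  shows "v \<bullet> v + (G x0 \<bullet> v)\<^sup>2 + (H x0 - z) * ((D x0 *v v) \<bullet> v) \<le> 0"
proof -
  obtain d where "d > 0"
    and d: "\<And>s. \<bar>s\<bar> < d \<Longrightarrow> x0 + s *\<^sub>R v \<in> U \<and> dist (c, z) (x0 + s *\<^sub>R v, H (x0 + s *\<^sub>R v)) \<le> r"
    using graph_in_cball_along_line[OF _ x0 inside] C2 unfolding C2_on_with_def by blast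
  have "2 * (v \<bullet> v) + 2 * (G x0 \<bullet> v)\<^sup>2 + 2 * (H x0 - z) * ((D x0 *v v) \<bullet> v) \<le> 0"
  proof (rule DERIV_local_max_second_deriv_nonpos[OF \<open>d > 0\<close>])
    show "((\<lambda>s. (norm (x0 + s *\<^sub>R v - c))\<^sup>2 + (H (x0 + s *\<^sub>R v) - z)\<^sup>2) has_real_derivative
        2 * ((x0 + s *\<^sub>R v - c) \<bullet> v) + 2 * (H (x0 + s *\<^sub>R v) - z) * (G (x0 + s *\<^sub>R v) \<bullet> v)) (at s)"
      if "\<bar>s - 0\<bar> < d" for s
      using that d C2 by (intro sqdist_graph_along_line_has_derivative) (auto simp: C2_on_with_def)
    show "((\<lambda>s. 2 * ((x0 + s *\<^sub>R v - c) \<bullet> v) + 2 * (H (x0 + s *\<^sub>R v) - z) * (G (x0 + s *\<^sub>R v) \<bullet> v))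
        has_real_derivative 2 * (v \<bullet> v) + 2 * (G x0 \<bullet> v)\<^sup>2 + 2 * (H x0 - z) * ((D x0 *v v) \<bullet> v)) (at 0)"
      using sqdist_graph_along_line_has_second_derivative[of H G x0 0 v D c z] C2 x0
      by (simp add: C2_on_with_def)
  qed (use d touch in \<open>auto simp flip: dist_Pair_power2 intro!: power_mono\<close>)
  then show ?thesis by (auto simp: algebra_simps)
qed

lemma graph_inside_sphere_curvature_ge:
  fixes H :: "real^'m \<Rightarrow> real"
  assumes C2: "C2_on_with H U G D" and x0: "x0 \<in> U" and r: "r > 0"
    and inside: "\<forall>\<^sub>F x in nhds x0. (x, H x) \<in> cball (c, z) r"
    and touch: "dist (c, z) (x0, H x0) = r"
    and v: "norm v = 1"
  shows "1 / r \<le> sectional_curvature (G x0) (D x0) v"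
proof -
  define \<mu> where "\<mu> = H x0 - z"
  define Q where "Q = 1 + (v \<bullet> G x0)\<^sup>2"
  have "Q > 0" by (simp add: Q_def add_pos_nonneg)
  have "x0 - c = - \<mu> *\<^sub>R G x0"
    using graph_inside_sphere_normal[OF C2 x0 inside touch] by (simp add: \<mu>_def algebra_simps)
  then have "(norm (x0 - c))\<^sup>2 = \<mu>\<^sup>2 * (norm (G x0))\<^sup>2" by (simp add: power_mult_distrib)
  moreover have "(norm (x0 - c))\<^sup>2 + \<mu>\<^sup>2 = r\<^sup>2"
    using touch dist_Pair_power2[of c z x0 "H x0"] by (simp add: \<mu>_def)
  ultimately have \<mu>_G: "\<mu>\<^sup>2 * (1 + (norm (G x0))\<^sup>2) = r\<^sup>2" by (simp add: algebra_simps)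
  then have "\<mu> \<noteq> 0" using r by auto
  with \<mu>_G have "1 + (norm (G x0))\<^sup>2 = (r / \<bar>\<mu>\<bar>)\<^sup>2" by (simp add: power_divide field_simps)
  then have sqrt_eq: "sqrt (1 + (norm (G x0))\<^sup>2) = r / \<bar>\<mu>\<bar>" using r by simp
  have "v \<bullet> v = 1" using v by (simp add: dot_square_norm)
  then have "Q \<le> \<bar>\<mu>\<bar> * \<bar>(D x0 *v v) \<bullet> v\<bar>"
    using graph_inside_sphere_second_order[OF C2 x0 inside touch, of v]
    by (simp add: Q_def \<mu>_def inner_commute abs_mult[symmetric])
  then show ?thesis
    using r \<open>Q > 0\<close> \<open>\<mu> \<noteq> 0\<close>
    by (simp add: sectional_curvature_def sqrt_eq Q_def[symmetric] field_simps)
qed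

lemma class_S_small_curv_gt_1:
  assumes K: "K \<in> class_S" and small: "smooth_bdry_small_curv K p \<epsilon>"
  shows "1 < \<epsilon>"
proof -
  obtain H U G D W i where C2: "C2_on_with H U G D" and x0: "fst p \<in> U" and "snd p = H (fst p)"
    and W: "open W" "p \<in> W" and graph: "frontier K \<inter> W = (\<lambda>y. (y, H y)) ` U \<inter> W"
    and curv: "sectional_curvature (G (fst p)) (D (fst p)) (axis i 1) < \<epsilon>"
    using small unfolding smooth_bdry_small_curv_iff by blast
  then have p: "p = (fst p, H (fst p))" by (simp add: prod_eq_iff)
  obtain F where F: "K = (\<Inter>a\<in>F. cball a 1)" using K unfolding class_S_def by blast
  moreover have "p \<in> frontier K" using small by (simp add: smooth_bdry_small_curv_def)
  ultimately obtain a where "K \<subseteq> cball a 1" and "dist a p = 1"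
    using Inter_cballs_frontier_supporting_ball[where F=F and p=p and r=1] by blast
  moreover obtain c z where "a = (c, z)" by fastforce
  ultimately have K_sub: "K \<subseteq> cball (c, z) 1" and "dist (c, z) p = 1" by simp_all
  have "closed K" unfolding F by (auto intro!: closed_Inter)
  have "continuous_on U (\<lambda>x. (x, H x))"
    using C2 unfolding C2_on_with_def
    by (intro continuous_intros has_derivative_continuous_on) (auto intro: has_derivative_at_withinI)
  then have "open (U \<inter> (\<lambda>x. (x, H x)) -` W)"
    using C2 W(1) unfolding C2_on_with_def by (intro continuous_open_preimage) auto
  moreover have "fst p \<in> U \<inter> (\<lambda>x. (x, H x)) -` W" using x0 W(2) p by auto
  ultimately have "\<forall>\<^sub>F x in nhds (fst p). x \<in> U \<inter> (\<lambda>x. (x, H x)) -` W"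
    by (rule eventually_nhds_in_open)
  moreover have "(x, H x) \<in> cball (c, z) 1" if "x \<in> U \<inter> (\<lambda>x. (x, H x)) -` W" for x
  proof -
    have "(x, H x) \<in> frontier K" using that graph by blast
    then show ?thesis using frontier_subset_closed[OF \<open>closed K\<close>] K_sub by blast
  qed
  ultimately have "\<forall>\<^sub>F x in nhds (fst p). (x, H x) \<in> cball (c, z) 1"
    by (rule eventually_mono)
  then have "1 / 1 \<le> sectional_curvature (G (fst p)) (D (fst p)) (axis i 1)"
    using \<open>dist (c, z) p = 1\<close> p by (intro graph_inside_sphere_curvature_ge[OF C2 x0]) auto
  with curv show ?thesis by simp
qed

section \<open>Hemispheres\<close>

lemma C2_on_with_subset:
  "C2_on_with H U G D \<Longrightarrow> open V \<Longrightarrow> V \<subseteq> U \<Longrightarrow> C2_on_with H V G D"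
  unfolding C2_on_with_def by (auto intro: continuous_on_subset)

lemma C2_on_with_add:
  assumes "C2_on_with H1 U G1 D1" and "C2_on_with H2 U G2 D2"
  shows "C2_on_with (\<lambda>x. H1 x + H2 x) U (\<lambda>x. G1 x + G2 x) (\<lambda>x. D1 x + D2 x)"
  using assms unfolding C2_on_with_def
  by (auto intro!: continuous_intros has_derivative_add[THEN has_derivative_eq_rhs]
      simp: inner_add_left matrix_vector_mult_add_rdistrib)

lemma C2_on_with_affine:
  assumes "C2_on_with H U G D"
  shows "C2_on_with (\<lambda>x. a * H x + b) U (\<lambda>x. a *\<^sub>R G x) (\<lambda>x. a *\<^sub>R D x)"
  using assms unfolding C2_on_with_def
  by (auto intro!: continuous_intros derivative_eq_intros
      simp: scaleR_matrix_vector_assoc[symmetric])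

definition hemisphere :: "real \<Rightarrow> 'a::real_normed_vector \<Rightarrow> 'a \<Rightarrow> real" where
  "hemisphere R c x = sqrt (R\<^sup>2 - (norm (x - c))\<^sup>2)"

definition hemisphere_grad :: "real \<Rightarrow> 'a::real_normed_vector \<Rightarrow> 'a \<Rightarrow> 'a" where
  "hemisphere_grad R c x = - (inverse (hemisphere R c x) *\<^sub>R (x - c))"

definition outer_prod :: "real^'m \<Rightarrow> real^'m^'m" where
  "outer_prod u = (\<chi> k l. u $ k * u $ l)"

definition hemisphere_hess :: "real \<Rightarrow> real^'m \<Rightarrow> real^'m \<Rightarrow> real^'m^'m" where
  "hemisphere_hess R c x =
     (- inverse (hemisphere R c x)) *\<^sub>R mat 1 - (1 / hemisphere R c x ^ 3) *\<^sub>R outer_prod (x - c)"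

lemma outer_prod_mult_vector: "outer_prod u *v h = (u \<bullet> h) *\<^sub>R u"
  by (simp add: vec_eq_iff outer_prod_def matrix_vector_mult_def inner_vec_def sum_distrib_left
      mult.commute mult.left_commute)

lemma hemisphere_hess_mult_vector:
  "hemisphere_hess R c x *v h =
     - (inverse (hemisphere R c x) *\<^sub>R h) - (((x - c) \<bullet> h) / hemisphere R c x ^ 3) *\<^sub>R (x - c)"
  unfolding hemisphere_hess_def matrix_vector_mult_diff_rdistrib outer_prod_mult_vector
    scaleR_matrix_vector_assoc[symmetric] matrix_vector_mul_lid
  by simp

lemma continuous_on_outer_prod [continuous_intros]:
  "continuous_on S f \<Longrightarrow> continuous_on S (\<lambda>x. outer_prod (f x))"
  unfolding outer_prod_def by (intro continuous_intros)

lemma continuous_on_hemisphere [continuous_intros]: "continuous_on S (hemisphere R c)"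
  unfolding hemisphere_def by (intro continuous_intros)

lemma hemisphere_pos: "x \<in> ball c R \<Longrightarrow> 0 < hemisphere R c x"
  by (auto simp: hemisphere_def dist_norm norm_minus_commute intro!: power_strict_mono)

lemma mem_cball_Pair_iff:
  fixes c x :: "'a::real_normed_vector"
  assumes "R \<ge> 0"
  shows "(x, y) \<in> cball (c, s) R \<longleftrightarrow> norm (x - c) \<le> R \<and> \<bar>y - s\<bar> \<le> hemisphere R c x"
proof -
  have "dist (c, s) (x, y) = sqrt ((norm (x - c))\<^sup>2 + (y - s)\<^sup>2)"
    unfolding dist_Pair_Pair by (simp add: dist_norm norm_minus_commute[of c x] power2_commute[of s y])
  then have "(x, y) \<in> cball (c, s) R \<longleftrightarrow> (norm (x - c))\<^sup>2 + (y - s)\<^sup>2 \<le> R\<^sup>2"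
    using assms by (simp add: mem_cball real_sqrt_le_iff')
  also have "\<dots> \<longleftrightarrow> norm (x - c) \<le> R \<and> (y - s)\<^sup>2 \<le> R\<^sup>2 - (norm (x - c))\<^sup>2"
  proof
    assume sq: "(norm (x - c))\<^sup>2 + (y - s)\<^sup>2 \<le> R\<^sup>2"
    have "(norm (x - c))\<^sup>2 \<le> R\<^sup>2" using sq zero_le_power2[of "y - s"] by linarith
    then have "norm (x - c) \<le> R" using assms by (rule power2_le_imp_le)
    then show "norm (x - c) \<le> R \<and> (y - s)\<^sup>2 \<le> R\<^sup>2 - (norm (x - c))\<^sup>2"
      using sq by linarith
  qed linarith
  also have "\<dots> \<longleftrightarrow> norm (x - c) \<le> R \<and> \<bar>y - s\<bar> \<le> hemisphere R c x"
    using real_sqrt_le_iff[of "(y - s)\<^sup>2" "R\<^sup>2 - (norm (x - c))\<^sup>2"] by (simp add: hemisphere_def)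
  finally show ?thesis .
qed

lemma mem_ball_Pair_iff:
  fixes c x :: "'a::real_normed_vector"
  assumes "R \<ge> 0"
  shows "(x, y) \<in> ball (c, s) R \<longleftrightarrow> norm (x - c) < R \<and> \<bar>y - s\<bar> < hemisphere R c x"
proof -
  have "dist (c, s) (x, y) < R \<longleftrightarrow> (dist (c, s) (x, y))\<^sup>2 < R\<^sup>2"
    using power_mono_iff[of R "dist (c, s) (x, y)" 2] assms by (metis not_le zero_le_dist zero_less_numeral)
  then have "(x, y) \<in> ball (c, s) R \<longleftrightarrow> (norm (x - c))\<^sup>2 + (y - s)\<^sup>2 < R\<^sup>2"
    by (simp add: mem_ball dist_Pair_power2)
  also have "\<dots> \<longleftrightarrow> norm (x - c) < R \<and> (y - s)\<^sup>2 < R\<^sup>2 - (norm (x - c))\<^sup>2"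
  proof
    assume sq: "(norm (x - c))\<^sup>2 + (y - s)\<^sup>2 < R\<^sup>2"
    have "(norm (x - c))\<^sup>2 < R\<^sup>2" using sq zero_le_power2[of "y - s"] by linarith
    then have "norm (x - c) < R" using assms by (rule power2_less_imp_less)
    then show "norm (x - c) < R \<and> (y - s)\<^sup>2 < R\<^sup>2 - (norm (x - c))\<^sup>2"
      using sq by linarith
  qed linarith
  also have "\<dots> \<longleftrightarrow> norm (x - c) < R \<and> \<bar>y - s\<bar> < hemisphere R c x"
    using real_sqrt_less_iff[of "(y - s)\<^sup>2" "R\<^sup>2 - (norm (x - c))\<^sup>2"] by (simp add: hemisphere_def)
  finally show ?thesis .
qed

lemma hemisphere_has_derivative:
  fixes c x :: "'a::real_inner"
  assumes "x \<in> ball c R"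
  shows "(hemisphere R c has_derivative (\<lambda>h. hemisphere_grad R c x \<bullet> h)) (at x)"
proof -
  have "((\<lambda>x. R\<^sup>2 - (x - c) \<bullet> (x - c)) has_derivative (\<lambda>h. - (2 * ((x - c) \<bullet> h)))) (at x)"
    by (auto intro!: derivative_eq_intros simp: inner_commute)
  then have "(hemisphere R c has_derivative
      (\<lambda>h. - (2 * ((x - c) \<bullet> h)) * (inverse (hemisphere R c x) / 2))) (at x)"
    using hemisphere_pos[OF assms] unfolding hemisphere_def power2_norm_eq_inner
    by (intro has_derivative_real_sqrt) auto
  then show ?thesis by (simp add: hemisphere_grad_def inner_commute mult.commute)
qed

lemma hemisphere_grad_has_derivative:
  fixes c x :: "real^'m"
  assumes "x \<in> ball c R"
  shows "(hemisphere_grad R c has_derivative (\<lambda>h. hemisphere_hess R c x *v h)) (at x)"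
proof -
  define \<rho> where "\<rho> = hemisphere R c x"
  have "\<rho> > 0" using hemisphere_pos[OF assms] by (simp add: \<rho>_def)
  have "((\<lambda>x. inverse (hemisphere R c x)) has_derivative
      (\<lambda>h. - (inverse \<rho> * (hemisphere_grad R c x \<bullet> h) * inverse \<rho>))) (at x)"
    using hemisphere_has_derivative[OF assms] \<open>\<rho> > 0\<close> unfolding \<rho>_def
    by (intro Deriv.has_derivative_inverse) auto
  moreover have "((\<lambda>x. x - c) has_derivative (\<lambda>h. h)) (at x)"
    by (auto intro!: derivative_eq_intros)
  ultimately have "(hemisphere_grad R c has_derivative
      (\<lambda>h. - (inverse \<rho> *\<^sub>R h + (- (inverse \<rho> * (hemisphere_grad R c x \<bullet> h) * inverse \<rho>)) *\<^sub>R (x - c))))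
      (at x)"
    unfolding hemisphere_grad_def[abs_def] \<rho>_def by (intro has_derivative_minus has_derivative_scaleR)
  moreover have "- (inverse \<rho> *\<^sub>R h + (- (inverse \<rho> * (hemisphere_grad R c x \<bullet> h) * inverse \<rho>)) *\<^sub>R (x - c))
      = hemisphere_hess R c x *v h" for h
    by (simp add: hemisphere_hess_mult_vector hemisphere_grad_def \<rho>_def[symmetric] power3_eq_cube
        divide_inverse mult.commute mult.left_commute)
  ultimately show ?thesis by simp
qed

lemma C2_on_with_hemisphere:
  "C2_on_with (hemisphere R c) (ball c R) (hemisphere_grad R c) (hemisphere_hess R c)"
  unfolding C2_on_with_def
proof (intro conjI ballI open_ball hemisphere_has_derivative hemisphere_grad_has_derivative)
  have "\<forall>x\<in>ball c R. hemisphere R c x \<noteq> 0" using hemisphere_pos by fastforce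
  then show "continuous_on (ball c R) (hemisphere_hess R c)"
    unfolding hemisphere_hess_def by (auto intro!: continuous_intros)
qed

lemma C2_on_with_half_sum_hemispheres:
  assumes "open U" and "U \<subseteq> ball c1 R \<inter> ball c2 R"
  shows "C2_on_with (\<lambda>x. (hemisphere R c1 x + hemisphere R c2 x - t) / 2) U
      (\<lambda>x. (1/2) *\<^sub>R (hemisphere_grad R c1 x + hemisphere_grad R c2 x))
      (\<lambda>x. (1/2) *\<^sub>R (hemisphere_hess R c1 x + hemisphere_hess R c2 x))"
proof -
  have "C2_on_with (\<lambda>x. hemisphere R c1 x + hemisphere R c2 x) U
      (\<lambda>x. hemisphere_grad R c1 x + hemisphere_grad R c2 x)
      (\<lambda>x. hemisphere_hess R c1 x + hemisphere_hess R c2 x)"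
    using assms by (intro C2_on_with_add C2_on_with_subset[OF C2_on_with_hemisphere]) auto
  then have "C2_on_with (\<lambda>x. (1/2) * (hemisphere R c1 x + hemisphere R c2 x) + - (t / 2)) U
      (\<lambda>x. (1/2) *\<^sub>R (hemisphere_grad R c1 x + hemisphere_grad R c2 x))
      (\<lambda>x. (1/2) *\<^sub>R (hemisphere_hess R c1 x + hemisphere_hess R c2 x))"
    by (rule C2_on_with_affine)
  moreover have "(\<lambda>x. (1/2) * (hemisphere R c1 x + hemisphere R c2 x) + - (t / 2))
      = (\<lambda>x. (hemisphere R c1 x + hemisphere R c2 x - t) / 2)"
    by (auto simp: fun_eq_iff)
  ultimately show ?thesis by simp
qed

section \<open>The Steiner symmetral of a thin lens\<close>

lemma mem_steiner_en_iff_chord: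
  fixes lo hi :: real
  assumes chord: "\<And>y. (x, y) \<in> K \<longleftrightarrow> lo \<le> y \<and> y \<le> hi" and "lo \<le> hi"
  shows "(x, y) \<in> steiner_en K \<longleftrightarrow> \<bar>y\<bar> \<le> (hi - lo) / 2"
proof -
  have "{t. (x, t) \<in> K} = {lo..hi}" by (simp add: set_eq_iff chord)
  moreover have "x \<in> fst ` K" using chord[of hi] \<open>lo \<le> hi\<close> by force
  ultimately show ?thesis using \<open>lo \<le> hi\<close> by (simp add: steiner_en_def)
qed

lemma frontier_symmetric_subgraph_on_graph:
  fixes S :: "('a::metric_space \<times> real) set"
  assumes U: "open U" and h: "continuous_on U h"
    and S: "\<And>x y. x \<in> U \<Longrightarrow> (x, y) \<in> S \<longleftrightarrow> \<bar>y\<bar> \<le> h x"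
    and z: "(x, y) \<in> frontier S" "x \<in> U" "y > 0"
  shows "y = h x"
proof -
  have cont: "continuous_on (U \<times> UNIV) (\<lambda>z. h (fst z))"
    by (rule continuous_on_compose2[of U h]) (auto intro: h continuous_intros)
  have "\<not> y < h x"
  proof
    assume "y < h x"
    define V where "V = (U \<times> UNIV) \<inter> (\<lambda>z. h (fst z) - \<bar>snd z\<bar>) -` {0<..}"
    have "open V" unfolding V_def using U
      by (intro continuous_open_preimage continuous_intros cont open_Times) auto
    moreover have "V \<subseteq> S" using S by (force simp: V_def)
    moreover have "(x, y) \<in> V" using \<open>y < h x\<close> z by (simp add: V_def)
    ultimately have "(x, y) \<in> interior S" using interior_maximal by blast
    with z show False by (simp add: frontier_def)
  qed
  moreover have "\<not> h x < y"
  proof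
    assume "h x < y"
    define V where "V = (U \<times> UNIV) \<inter> (\<lambda>z. snd z - h (fst z)) -` {0<..}"
    have "open V" unfolding V_def using U
      by (intro continuous_open_preimage continuous_intros cont open_Times) auto
    moreover have "V \<inter> S = {}" using S by (force simp: V_def)
    moreover have "(x, y) \<in> V" using \<open>h x < y\<close> z by (simp add: V_def)
    ultimately have "(x, y) \<notin> closure S" by (meson disjoint_iff open_Int_closure_eq_empty)
    with z show False by (simp add: frontier_def)
  qed
  ultimately show ?thesis by linarith
qed

lemma graph_in_frontier_symmetric_subgraph:
  fixes S :: "('a::metric_space \<times> real) set"
  assumes S: "\<And>y. (x, y) \<in> S \<longleftrightarrow> \<bar>y\<bar> \<le> h" and "h \<ge> 0"
  shows "(x, h) \<in> frontier S"
  unfolding frontier_straddle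
proof (intro allI impI conjI)
  fix \<delta> :: real assume "\<delta> > 0"
  show "\<exists>u\<in>S. dist (x, h) u < \<delta>"
    using S \<open>h \<ge> 0\<close> \<open>\<delta> > 0\<close> by (intro bexI[of _ "(x, h)"]) auto
  have "(x, h + \<delta> / 2) \<notin> S" using S \<open>h \<ge> 0\<close> \<open>\<delta> > 0\<close> by simp
  moreover have "dist (x, h) (x, h + \<delta> / 2) < \<delta>"
    using \<open>\<delta> > 0\<close> by (simp add: dist_Pair_Pair dist_real_def)
  ultimately show "\<exists>u. u \<notin> S \<and> dist (x, h) u < \<delta>" by blast
qed

lemma steiner_lens_smooth_bdry_point:
  fixes c1 c2 x0 :: "real^'m"
  assumes R: "R > 0" and x0: "x0 \<in> ball c1 R \<inter> ball c2 R"
    and thin: "\<bar>hemisphere R c1 x0 - hemisphere R c2 x0\<bar> < t"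
    and thick: "t < hemisphere R c1 x0 + hemisphere R c2 x0"
    and curv: "sectional_curvature ((1/2) *\<^sub>R (hemisphere_grad R c1 x0 + hemisphere_grad R c2 x0))
                 ((1/2) *\<^sub>R (hemisphere_hess R c1 x0 + hemisphere_hess R c2 x0)) (axis i 1) < \<epsilon>"
  shows "smooth_bdry_small_curv (steiner_en (cball (c1, t) R \<inter> cball (c2, 0) R))
           (x0, (hemisphere R c1 x0 + hemisphere R c2 x0 - t) / 2) \<epsilon>"
proof -
  let ?K = "cball (c1, t) R \<inter> cball (c2, 0) R"
  define g where "g = (\<lambda>x. (hemisphere R c1 x + hemisphere R c2 x - t) / 2)"
  define U where "U = {x. dist c1 x < R \<and> dist c2 x < R \<and>
      \<bar>hemisphere R c1 x - hemisphere R c2 x\<bar> < t \<and> t < hemisphere R c1 x + hemisphere R c2 x}"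
  have "open U" unfolding U_def
    by (intro open_Collect_conj open_Collect_less continuous_intros)
  have x0_U: "x0 \<in> U" using x0 thin thick by (simp add: U_def)
  have chord: "(x, y) \<in> ?K \<longleftrightarrow> t - hemisphere R c1 x \<le> y \<and> y \<le> hemisphere R c2 x"
    if "x \<in> U" for x y
    using that unfolding Int_iff mem_cball_Pair_iff[OF less_imp_le[OF R]]
    by (auto simp: U_def dist_norm norm_minus_commute abs_le_iff)
  have symmetral: "(x, y) \<in> steiner_en ?K \<longleftrightarrow> \<bar>y\<bar> \<le> g x" if "x \<in> U" for x y
  proof -
    have "t - hemisphere R c1 x \<le> hemisphere R c2 x" using that by (simp add: U_def)
    then show ?thesis
      using mem_steiner_en_iff_chord[OF chord[OF that]] by (simp add: g_def algebra_simps)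
  qed
  have "continuous_on U g" unfolding g_def by (auto intro!: continuous_intros)
  have graph: "frontier (steiner_en ?K) \<inter> (U \<times> {0<..}) = (\<lambda>x. (x, g x)) ` U \<inter> (U \<times> {0<..})"
    using frontier_symmetric_subgraph_on_graph[OF \<open>open U\<close> \<open>continuous_on U g\<close> symmetral]
      graph_in_frontier_symmetric_subgraph[OF symmetral]
    by fastforce
  have "g x0 > 0" using thick by (simp add: g_def)
  then have x0_W: "(x0, g x0) \<in> U \<times> {0<..}" using x0_U by simp
  have "C2_on_with g U
      (\<lambda>x. (1/2) *\<^sub>R (hemisphere_grad R c1 x + hemisphere_grad R c2 x))
      (\<lambda>x. (1/2) *\<^sub>R (hemisphere_hess R c1 x + hemisphere_hess R c2 x))"
    unfolding g_def using \<open>open U\<close> by (intro C2_on_with_half_sum_hemispheres) (auto simp: U_def)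
  moreover have "(hemisphere R c1 x0 + hemisphere R c2 x0 - t) / 2 = g x0" by (simp add: g_def)
  ultimately show ?thesis
    unfolding smooth_bdry_small_curv_iff
    using x0_U x0_W graph curv \<open>open U\<close> by (intro conjI exI) (auto intro: open_Times)
qed

lemma sectional_curvature_lens_at_0:
  fixes i j :: "'m::finite" and \<alpha> \<gamma> :: real
  defines "c1 \<equiv> - (\<alpha> *\<^sub>R axis i 1) :: real^'m" and "c2 \<equiv> - (\<gamma> *\<^sub>R axis j 1) :: real^'m"
  assumes "i \<noteq> j" and "t > 0" "r > 0" "\<gamma> > 0"
    and h1: "hemisphere R c1 0 = t" and h2: "hemisphere R c2 0 = r"
  shows "sectional_curvature ((1/2) *\<^sub>R (hemisphere_grad R c1 0 + hemisphere_grad R c2 0))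
           ((1/2) *\<^sub>R (hemisphere_hess R c1 0 + hemisphere_hess R c2 0)) (axis i 1)
         \<le> r * (1 / t + \<alpha>\<^sup>2 / t ^ 3 + 1 / r) / (\<gamma> * (1 + \<alpha>\<^sup>2 / (4 * t\<^sup>2)))"
proof -
  define G where "G = (1/2) *\<^sub>R (hemisphere_grad R c1 0 + hemisphere_grad R c2 0)"
  define D where "D = (1/2) *\<^sub>R (hemisphere_hess R c1 0 + hemisphere_hess R c2 0)"
  have "axis i 1 $ j = (0::real)" "axis j 1 $ i = (0::real)" using \<open>i \<noteq> j\<close> by (auto simp: axis_def)
  then have ax: "c1 $ i = - \<alpha>" "c1 $ j = 0" "c2 $ i = 0" "c2 $ j = - \<gamma>" by (simp_all add: c1_def c2_def)
  have D_ii: "(D *v axis i 1) \<bullet> axis i 1 = - (1/2) * (1 / t + \<alpha>\<^sup>2 / t ^ 3 + 1 / r)"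
    using h1 h2 ax
    by (simp add: D_def scaleR_matrix_vector_assoc[symmetric] matrix_vector_mult_add_rdistrib
        hemisphere_hess_mult_vector inner_axis inner_axis' power2_eq_square field_simps)
  have G_i: "axis i 1 \<bullet> G = - \<alpha> / (2 * t)"
    using h1 h2 ax by (simp add: G_def hemisphere_grad_def inner_axis' inverse_eq_divide)
  have M_ge: "\<gamma> / (2 * r) \<le> sqrt (1 + (norm G)\<^sup>2)"
  proof -
    have "\<gamma> / (2 * r) = \<bar>G $ j\<bar>"
      using h1 h2 ax \<open>\<gamma> > 0\<close> \<open>r > 0\<close> by (simp add: G_def hemisphere_grad_def inverse_eq_divide)
    also have "\<dots> \<le> norm G" by (rule component_le_norm_cart)
    also have "\<dots> \<le> sqrt (1 + (norm G)\<^sup>2)" by (rule real_le_rsqrt) simp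
    finally show ?thesis .
  qed
  define S where "S = 1 / t + \<alpha>\<^sup>2 / t ^ 3 + 1 / r"
  define Q where "Q = 1 + \<alpha>\<^sup>2 / (4 * t\<^sup>2)"
  have "S > 0" "Q > 0" using \<open>t > 0\<close> \<open>r > 0\<close> by (auto simp: S_def Q_def intro!: add_pos_nonneg)
  have "sectional_curvature G D (axis i 1) = S / 2 / (sqrt (1 + (norm G)\<^sup>2) * Q)"
    using \<open>S > 0\<close> \<open>t > 0\<close>
    by (simp add: sectional_curvature_def D_ii G_i S_def[symmetric] Q_def power_divide)
  also have "\<dots> \<le> S / 2 / (\<gamma> / (2 * r) * Q)"
    using M_ge \<open>S > 0\<close> \<open>Q > 0\<close> \<open>\<gamma> > 0\<close> \<open>r > 0\<close>
    by (intro divide_left_mono mult_right_mono mult_pos_pos) (auto intro: add_pos_nonneg)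
  also have "\<dots> = r * S / (\<gamma> * Q)"
    using \<open>r > 0\<close> by (simp add: field_simps)
  finally show ?thesis by (simp add: G_def D_def S_def Q_def)
qed

lemma lens_curvature_estimate:
  assumes R: "R > (0::real)" and \<epsilon>: "\<epsilon> > 0" and \<alpha>2: "\<alpha>\<^sup>2 = R\<^sup>2 - t\<^sup>2" and "t > 0"
  and "t \<le> R / 2" "t \<le> R\<^sup>2 * \<epsilon> / 32" "R / 2 \<le> \<gamma>"
  shows "2 / (\<gamma> * (1 + \<alpha>\<^sup>2 / (4 * t\<^sup>2))) < \<epsilon>"
proof -
  define Q where "Q = 1 + \<alpha>\<^sup>2 / (4 * t\<^sup>2)"
  have "Q > 0" by (simp add: Q_def add_pos_nonneg)
  have "t\<^sup>2 \<le> (R / 2)\<^sup>2" using \<open>t > 0\<close> \<open>t \<le> R / 2\<close> by (intro power_mono) auto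
  then have Qt: "3 * R\<^sup>2 / 16 \<le> Q * t\<^sup>2"
    using \<open>t > 0\<close> by (simp add: Q_def \<alpha>2 power_divide field_simps)
  have "t\<^sup>2 \<le> R ^ 3 * \<epsilon> / 64"
  proof -
    have "t * t \<le> (R / 2) * (R\<^sup>2 * \<epsilon> / 32)"
      using \<open>t > 0\<close> \<open>t \<le> R / 2\<close> \<open>t \<le> R\<^sup>2 * \<epsilon> / 32\<close> by (intro mult_mono) auto
    then show ?thesis by (simp add: power2_eq_square power3_eq_cube)
  qed
  then have "6 * t\<^sup>2 \<le> \<epsilon> * (R / 2) * (3 * R\<^sup>2 / 16)"
    by (simp add: power2_eq_square power3_eq_cube)
  also have "\<dots> \<le> \<epsilon> * (R / 2) * (Q * t\<^sup>2)"
    using \<open>3 * R\<^sup>2 / 16 \<le> Q * t\<^sup>2\<close> \<epsilon> R by (intro mult_left_mono) auto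
  also have "\<dots> \<le> \<epsilon> * \<gamma> * (Q * t\<^sup>2)"
    using \<epsilon> \<open>R / 2 \<le> \<gamma>\<close> \<open>Q > 0\<close>
    by (intro mult_right_mono mult_left_mono) auto
  finally have "2 < \<epsilon> * (\<gamma> * Q)" using \<open>t > 0\<close> by simp
  moreover have "\<gamma> * Q > 0" using \<open>R / 2 \<le> \<gamma>\<close> R \<open>Q > 0\<close> by simp
  ultimately show ?thesis by (simp add: Q_def[symmetric] divide_less_eq)
qed

lemma lens_parameters:
  fixes R \<epsilon> :: real
  assumes R: "R > 0" and \<epsilon>: "\<epsilon> > 0"
  obtains t r \<alpha> \<gamma> where "0 < r" "r < t" "0 \<le> \<alpha>" "0 < \<gamma>" "\<alpha>\<^sup>2 + t\<^sup>2 = R\<^sup>2" "\<gamma>\<^sup>2 + r\<^sup>2 = R\<^sup>2"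
    and "r * (1 / t + \<alpha>\<^sup>2 / t ^ 3 + 1 / r) / (\<gamma> * (1 + \<alpha>\<^sup>2 / (4 * t\<^sup>2))) < \<epsilon>"
proof -
  define t where "t = min (R / 2) (R\<^sup>2 * \<epsilon> / 32)"
  txt \<open>With this \<open>r\<close>, \<open>- \<partial>\<^sub>i\<^sub>i\<rho>\<^sub>2(0) = 1 / r\<close> equals \<open>- \<partial>\<^sub>i\<^sub>i\<rho>\<^sub>1(0) = R\<^sup>2 / t\<^sup>3\<close>.\<close>
  define r where "r = t ^ 3 / R\<^sup>2"
  define \<alpha> where "\<alpha> = sqrt (R\<^sup>2 - t\<^sup>2)"
  define \<gamma> where "\<gamma> = sqrt (R\<^sup>2 - r\<^sup>2)"
  have "t > 0" "t \<le> R / 2" "t \<le> R\<^sup>2 * \<epsilon> / 32" using R \<epsilon> by (auto simp: t_def)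
  have "r > 0" using \<open>t > 0\<close> R by (simp add: r_def)
  have "r \<le> t / 4"
  proof -
    have "t\<^sup>2 \<le> (R / 2)\<^sup>2" using \<open>t > 0\<close> \<open>t \<le> R / 2\<close> by (intro power_mono) auto
    then show ?thesis using \<open>t > 0\<close> R by (simp add: r_def power2_eq_square power3_eq_cube field_simps)
  qed
  have "t < R" "r < R" using \<open>t \<le> R / 2\<close> \<open>r \<le> t / 4\<close> \<open>t > 0\<close> by linarith+
  then have "t\<^sup>2 < R\<^sup>2" "r\<^sup>2 < R\<^sup>2" using \<open>t > 0\<close> \<open>r > 0\<close> by (auto intro!: power_strict_mono)
  then have \<alpha>2: "\<alpha>\<^sup>2 = R\<^sup>2 - t\<^sup>2" and \<gamma>2: "\<gamma>\<^sup>2 = R\<^sup>2 - r\<^sup>2" and "\<alpha> \<ge> 0" "\<gamma> \<ge> 0"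
    by (simp_all add: \<alpha>_def \<gamma>_def less_imp_le)
  have "R / 2 \<le> \<gamma>"
  proof -
    have "r\<^sup>2 \<le> (R / 8)\<^sup>2" using \<open>r > 0\<close> \<open>r \<le> t / 4\<close> \<open>t \<le> R / 2\<close> by (intro power_mono) auto
    moreover have "(R / 2)\<^sup>2 = R\<^sup>2 / 4" "(R / 8)\<^sup>2 = R\<^sup>2 / 64" by (simp_all add: power_divide)
    ultimately have "(R / 2)\<^sup>2 \<le> \<gamma>\<^sup>2" using zero_le_power2[of R] unfolding \<gamma>2 by linarith
    then show ?thesis using \<open>\<gamma> \<ge> 0\<close> by (rule power2_le_imp_le)
  qed
  have "1 / t + \<alpha>\<^sup>2 / t ^ 3 = R\<^sup>2 / t ^ 3"
    using \<open>t > 0\<close> \<alpha>2 by (simp add: field_simps power2_eq_square power3_eq_cube)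
  then have "r * (1 / t + \<alpha>\<^sup>2 / t ^ 3 + 1 / r) = 2"
    using \<open>t > 0\<close> \<open>r > 0\<close> R by (simp add: r_def field_simps)
  moreover have "2 / (\<gamma> * (1 + \<alpha>\<^sup>2 / (4 * t\<^sup>2))) < \<epsilon>"
    using R \<epsilon> \<alpha>2 \<open>t > 0\<close> \<open>t \<le> R / 2\<close> \<open>t \<le> R\<^sup>2 * \<epsilon> / 32\<close> \<open>R / 2 \<le> \<gamma>\<close>
    by (rule lens_curvature_estimate)
  ultimately show ?thesis
    using that[of r t \<alpha> \<gamma>] \<open>r > 0\<close> \<open>r \<le> t / 4\<close> \<open>t > 0\<close> \<open>\<alpha> \<ge> 0\<close> \<open>R / 2 \<le> \<gamma>\<close> R \<alpha>2 \<gamma>2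
    by simp
qed

lemma lens_steiner_small_curvature:
  assumes R: "R > 0" and \<epsilon>: "\<epsilon> > 0" and card: "CARD('m) \<ge> 2"
  shows "\<exists>(a::(real^'m) \<times> real) b. interior (cball a R \<inter> cball b R) \<noteq> {} \<and>
           (\<exists>p. smooth_bdry_small_curv (steiner_en (cball a R \<inter> cball b R)) p \<epsilon>)"
proof -
  have "\<not> CARD('m) \<le> Suc 0" using card by simp
  then obtain i j :: 'm where "i \<noteq> j" by (auto simp: card_le_Suc0_iff_eq)
  obtain t r \<alpha> \<gamma> where "0 < r" "r < t" "0 \<le> \<alpha>" "0 < \<gamma>" and \<alpha>2: "\<alpha>\<^sup>2 + t\<^sup>2 = R\<^sup>2"
    and \<gamma>2: "\<gamma>\<^sup>2 + r\<^sup>2 = R\<^sup>2"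
    and small: "r * (1 / t + \<alpha>\<^sup>2 / t ^ 3 + 1 / r) / (\<gamma> * (1 + \<alpha>\<^sup>2 / (4 * t\<^sup>2))) < \<epsilon>"
    by (rule lens_parameters[OF R \<epsilon>])
  define c1 :: "real^'m" where "c1 = - (\<alpha> *\<^sub>R axis i 1)"
  define c2 :: "real^'m" where "c2 = - (\<gamma> *\<^sub>R axis j 1)"
  have "norm (0 - c1) = \<alpha>" "norm (0 - c2) = \<gamma>"
    using \<open>0 \<le> \<alpha>\<close> \<open>0 < \<gamma>\<close> by (simp_all add: c1_def c2_def)
  moreover have "\<alpha> < R" "\<gamma> < R"
  proof -
    have "0 < t\<^sup>2" "0 < r\<^sup>2" using \<open>0 < r\<close> \<open>r < t\<close> by simp_all
    then have "\<alpha>\<^sup>2 < R\<^sup>2" "\<gamma>\<^sup>2 < R\<^sup>2" using \<alpha>2 \<gamma>2 by linarith+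
    then show "\<alpha> < R" "\<gamma> < R" using R by (simp_all add: power2_less_imp_less)
  qed
  moreover have "R\<^sup>2 - \<alpha>\<^sup>2 = t\<^sup>2" "R\<^sup>2 - \<gamma>\<^sup>2 = r\<^sup>2" using \<alpha>2 \<gamma>2 by simp_all
  ultimately have "0 \<in> ball c1 R \<inter> ball c2 R" and h1: "hemisphere R c1 0 = t" and h2: "hemisphere R c2 0 = r"
    using \<open>0 < r\<close> \<open>r < t\<close> by (simp_all add: hemisphere_def dist_norm)
  have "sectional_curvature ((1/2) *\<^sub>R (hemisphere_grad R c1 0 + hemisphere_grad R c2 0))
      ((1/2) *\<^sub>R (hemisphere_hess R c1 0 + hemisphere_hess R c2 0)) (axis i 1) < \<epsilon>"
    using \<open>i \<noteq> j\<close> \<open>0 < r\<close> \<open>r < t\<close> \<open>0 < \<gamma>\<close> h1 h2 unfolding c1_def c2_def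
    by (intro order_le_less_trans[OF sectional_curvature_lens_at_0 small]) auto
  then have "smooth_bdry_small_curv (steiner_en (cball (c1, t) R \<inter> cball (c2, 0) R))
      (0, (hemisphere R c1 0 + hemisphere R c2 0 - t) / 2) \<epsilon>"
    using \<open>0 \<in> ball c1 R \<inter> ball c2 R\<close> \<open>0 < r\<close> \<open>r < t\<close> R h1 h2
    by (intro steiner_lens_smooth_bdry_point) auto
  moreover have "(0, r / 2) \<in> interior (cball (c1, t) R \<inter> cball (c2, 0) R)"
    using \<open>0 \<in> ball c1 R \<inter> ball c2 R\<close> \<open>0 < r\<close> \<open>r < t\<close> R h1 h2
    unfolding interior_Int interior_cball Int_iff mem_ball_Pair_iff[OF less_imp_le[OF R]]
    by (simp add: dist_norm norm_minus_commute)
  ultimately show ?thesis by blast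
qed

theorem proposition4p7:
  assumes "CARD('m) \<ge> 2"
  shows "(\<forall>\<epsilon>>0. \<exists>(a::(real^'m) \<times> real) b.
            interior (cball a 1 \<inter> cball b 1) \<noteq> {} \<and>
            (\<exists>p. smooth_bdry_small_curv (steiner_en (cball a 1 \<inter> cball b 1)) p \<epsilon>)) \<and>
         (\<forall>\<kappa>>0. \<exists>(a::(real^'m) \<times> real) b.
            interior (cball a (1/\<kappa>) \<inter> cball b (1/\<kappa>)) \<noteq> {} \<and>
            steiner_en (cball a (1/\<kappa>) \<inter> cball b (1/\<kappa>)) \<notin> class_S)"
proof (intro conjI allI impI)
  fix \<epsilon> :: real
  assume "\<epsilon> > 0"
  then show "\<exists>(a::(real^'m) \<times> real) b. interior (cball a 1 \<inter> cball b 1) \<noteq> {} \<and>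
      (\<exists>p. smooth_bdry_small_curv (steiner_en (cball a 1 \<inter> cball b 1)) p \<epsilon>)"
    using lens_steiner_small_curvature[of 1 \<epsilon>] assms by simp
next
  fix \<kappa> :: real
  assume "\<kappa> > 0"
  then obtain a b :: "(real^'m) \<times> real" and p
    where "interior (cball a (1/\<kappa>) \<inter> cball b (1/\<kappa>)) \<noteq> {}"
      and "smooth_bdry_small_curv (steiner_en (cball a (1/\<kappa>) \<inter> cball b (1/\<kappa>))) p 1"
    using lens_steiner_small_curvature[OF _ zero_less_one assms, of "1/\<kappa>"] by (meson divide_pos_pos zero_less_one)
  then show "\<exists>(a::(real^'m) \<times> real) b. interior (cball a (1/\<kappa>) \<inter> cball b (1/\<kappa>)) \<noteq> {} \<and>
      steiner_en (cball a (1/\<kappa>) \<inter> cball b (1/\<kappa>)) \<notin> class_S"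
    using class_S_small_curv_gt_1 by fastforce
qed

end
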